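(* Let $K$ be any field, $m\ge 2$ an integer, $R=K[x_1,\dots,x_{3m+3}]$, and for $n=1,\dots,m$ set $s_n=x_{3n-2}x_{3n+2}$, $t_n=x_{3n+1}x_{3n+3}$, $u_n=x_{3n+1}x_{3n+2}$, $v_n=x_{3n-1}x_{3n+3}$, and $r_1=x_1x_2$. Let $I_m=(r_1, s_n,t_n,u_n,v_n : 1\le n\le m)$ and $J_m=(x_1x_2,\ s_n+t_n,\ u_n+v_n : 1\le n\le m)$. Then $I_m=\sqrt{J_m}$. *)

theory Defs
  imports "HOL-Library.Poly_Mapping"
begin

text \<open>Multivariate polynomials over a ring 'a in variables indexed by nat:
  a polynomial is a finitely supported map from monomials (finitely supported exponent vectors) to coefficients.\<close>

type_synonym 'a mpoly = "(nat \<Rightarrow>\<^sub>0 nat) \<Rightarrow>\<^sub>0 'a"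

definition mvar :: "nat \<Rightarrow> 'a::comm_ring_1 mpoly" where
  "mvar i = Poly_Mapping.single (Poly_Mapping.single i 1) 1"

definition poly_ring :: "nat \<Rightarrow> 'a::comm_ring_1 mpoly set" where
  "poly_ring N = {p. \<forall>mon\<in>Poly_Mapping.keys p. Poly_Mapping.keys mon \<subseteq> {1..N}}"

definition ideal_gen :: "'a::comm_ring_1 set \<Rightarrow> 'a set \<Rightarrow> 'a set" where
  "ideal_gen A G = {(\<Sum>g\<in>F. c g * g) | F c. finite F \<and> F \<subseteq> G \<and> (\<forall>g\<in>F. c g \<in> A)}"

definition radical :: "'a::comm_ring_1 set \<Rightarrow> 'a set \<Rightarrow> 'a set" where
  "radical A J = {f\<in>A. \<exists>n. f ^ n \<in> J}"

end

theory Submission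
  imports Defs
begin

text \<open>
  The inclusion \<open>I \<subseteq> \<surd>J\<close> goes up a chain. We have \<open>x1 x2 \<in> \<surd>J\<close>, and once
  \<open>x(3n-2) x(3n-1) \<in> \<surd>J\<close>, the two binomial generators \<open>s_n + t_n\<close> and \<open>u_n + v_n\<close>
  force each of \<open>s_n, t_n, u_n, v_n\<close> into \<open>\<surd>J\<close>: suitable combinations of the three
  known elements are the squares of \<open>v_n\<close> and \<open>s_n\<close>. Then \<open>u_n = x(3n+1) x(3n+2)\<close>
  is the next link of the chain.
  Conversely \<open>J \<subseteq> I\<close>, and \<open>I\<close> is radical because it is generated by squarefree
  monomials: if \<open>f \<notin> I\<close>, some term \<open>x^k\<close> of \<open>f\<close> is divisible by no generator, and
  setting all variables outside the support of \<open>k\<close> to zero is a ring homomorphism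
  that kills \<open>I\<close> but not \<open>f\<close>, hence not \<open>f^n\<close>.
\<close>

locale subring =
  fixes A :: "'a::comm_ring_1 set"
  assumes zero_mem [simp]: "0 \<in> A"
    and one_mem [simp]: "1 \<in> A"
    and add_mem: "a \<in> A \<Longrightarrow> b \<in> A \<Longrightarrow> a + b \<in> A"
    and uminus_mem: "a \<in> A \<Longrightarrow> - a \<in> A"
    and mult_mem: "a \<in> A \<Longrightarrow> b \<in> A \<Longrightarrow> a * b \<in> A"
begin

lemma power_mem: "a \<in> A \<Longrightarrow> a ^ n \<in> A"
  by (induction n) (simp_all add: mult_mem)

lemma of_nat_mem: "of_nat n \<in> A"
  by (induction n) (simp_all add: add_mem)

lemma ideal_gen_zero: "0 \<in> ideal_gen A G"
  unfolding ideal_gen_def by (auto intro!: exI[of _ "{}"])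

lemma ideal_gen_mult_generator: "c \<in> A \<Longrightarrow> g \<in> G \<Longrightarrow> c * g \<in> ideal_gen A G"
  unfolding ideal_gen_def by (auto intro!: exI[of _ "{g}"] exI[of _ "\<lambda>_. c"])

lemma generator_mem_ideal_gen: "g \<in> G \<Longrightarrow> g \<in> ideal_gen A G"
  using ideal_gen_mult_generator[OF one_mem] by simp

lemma ideal_gen_add:
  assumes "a \<in> ideal_gen A G" "b \<in> ideal_gen A G"
  shows "a + b \<in> ideal_gen A G"
proof -
  obtain F1 c1 where 1: "a = (\<Sum>g\<in>F1. c1 g * g)" "finite F1" "F1 \<subseteq> G" "\<forall>g\<in>F1. c1 g \<in> A"
    using assms(1) unfolding ideal_gen_def by blast
  obtain F2 c2 where 2: "b = (\<Sum>g\<in>F2. c2 g * g)" "finite F2" "F2 \<subseteq> G" "\<forall>g\<in>F2. c2 g \<in> A"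
    using assms(2) unfolding ideal_gen_def by blast
  define c where "c g = (if g \<in> F1 then c1 g else 0) + (if g \<in> F2 then c2 g else 0)" for g
  have "(\<Sum>g\<in>F1 \<union> F2. c g * g)
      = (\<Sum>g\<in>F1 \<union> F2. if g \<in> F1 then c1 g * g else 0) + (\<Sum>g\<in>F1 \<union> F2. if g \<in> F2 then c2 g * g else 0)"
    unfolding c_def distrib_right sum.distrib[symmetric] by (rule sum.cong) auto
  also have "\<dots> = a + b"
    using 1 2 by (simp add: sum.inter_restrict[symmetric] Int_absorb1)
  finally have "a + b = (\<Sum>g\<in>F1 \<union> F2. c g * g)" ..
  moreover have "\<forall>g\<in>F1 \<union> F2. c g \<in> A"
    using 1 2 by (auto simp: c_def add_mem)
  ultimately show ?thesis
    using 1 2 unfolding ideal_gen_def by blast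
qed

lemma ideal_gen_mult:
  assumes "r \<in> A" "a \<in> ideal_gen A G"
  shows "r * a \<in> ideal_gen A G"
proof -
  obtain F c where F: "a = (\<Sum>g\<in>F. c g * g)" "finite F" "F \<subseteq> G" "\<forall>g\<in>F. c g \<in> A"
    using assms(2) unfolding ideal_gen_def by blast
  then have "r * a = (\<Sum>g\<in>F. (r * c g) * g)"
    by (simp add: sum_distrib_left mult.assoc)
  with F assms(1) show ?thesis
    unfolding ideal_gen_def by (auto intro!: exI[of _ F] exI[of _ "\<lambda>g. r * c g"] mult_mem)
qed

lemma ideal_gen_sum:
  "(\<And>x. x \<in> X \<Longrightarrow> f x \<in> ideal_gen A G) \<Longrightarrow> sum f X \<in> ideal_gen A G"
  by (induction X rule: infinite_finite_induct) (auto simp: ideal_gen_zero ideal_gen_add)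

lemma ideal_gen_least:
  assumes "0 \<in> Q" "\<And>a b. a \<in> Q \<Longrightarrow> b \<in> Q \<Longrightarrow> a + b \<in> Q"
    "\<And>r a. r \<in> A \<Longrightarrow> a \<in> Q \<Longrightarrow> r * a \<in> Q" "G \<subseteq> Q"
  shows "ideal_gen A G \<subseteq> Q"
proof
  fix f assume "f \<in> ideal_gen A G"
  then obtain F c where F: "f = (\<Sum>g\<in>F. c g * g)" "finite F" "F \<subseteq> G" "\<forall>g\<in>F. c g \<in> A"
    unfolding ideal_gen_def by blast
  have "(\<Sum>g\<in>F'. c g * g) \<in> Q" if "F' \<subseteq> F" for F'
    using finite_subset[OF that F(2)] that
    by (induction F' rule: finite_induct) (use assms F in auto)
  then show "f \<in> Q"
    using F by simp
qed

lemma generator_mem_radical: "G \<subseteq> A \<Longrightarrow> g \<in> G \<Longrightarrow> g \<in> radical A (ideal_gen A G)"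
  unfolding radical_def by (auto intro!: exI[of _ 1] generator_mem_ideal_gen)

lemma radical_zero: "0 \<in> radical A (ideal_gen A G)"
  unfolding radical_def using ideal_gen_zero by (auto intro!: exI[of _ 1])

lemma radical_mult:
  assumes "r \<in> A" "a \<in> radical A (ideal_gen A G)"
  shows "r * a \<in> radical A (ideal_gen A G)"
proof -
  obtain n where "a \<in> A" "a ^ n \<in> ideal_gen A G"
    using assms(2) unfolding radical_def by blast
  then have "(r * a) ^ n \<in> ideal_gen A G"
    using ideal_gen_mult[OF power_mem[OF assms(1)]] by (simp add: power_mult_distrib)
  with assms(1) \<open>a \<in> A\<close> show ?thesis
    unfolding radical_def by (blast intro: mult_mem)
qed

lemma radical_add:
  assumes "a \<in> radical A (ideal_gen A G)" "b \<in> radical A (ideal_gen A G)"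
  shows "a + b \<in> radical A (ideal_gen A G)"
proof -
  obtain p where p: "a \<in> A" "a ^ p \<in> ideal_gen A G"
    using assms(1) unfolding radical_def by blast
  obtain q where q: "b \<in> A" "b ^ q \<in> ideal_gen A G"
    using assms(2) unfolding radical_def by blast
  have "(a + b) ^ (p + q) = (\<Sum>k\<le>p+q. of_nat (p + q choose k) * a ^ k * b ^ (p + q - k))"
    by (rule binomial_ring)
  also have "\<dots> \<in> ideal_gen A G"
  proof (rule ideal_gen_sum)
    fix k
    have coeff: "of_nat (p + q choose k) \<in> A"
      by (rule of_nat_mem)
    show "of_nat (p + q choose k) * a ^ k * b ^ (p + q - k) \<in> ideal_gen A G"
    proof (cases "p \<le> k")
      case True
      then have "a ^ k = a ^ (k - p) * a ^ p"
        by (simp add: power_add[symmetric])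
      then have "of_nat (p + q choose k) * a ^ k * b ^ (p + q - k)
          = (of_nat (p + q choose k) * a ^ (k - p) * b ^ (p + q - k)) * a ^ p"
        by (simp add: mult_ac)
      then show ?thesis
        using p q coeff by (metis ideal_gen_mult mult_mem power_mem)
    next
      case False
      then have "b ^ (p + q - k) = b ^ (p - k) * b ^ q"
        by (simp add: power_add[symmetric])
      then have "of_nat (p + q choose k) * a ^ k * b ^ (p + q - k)
          = (of_nat (p + q choose k) * a ^ k * b ^ (p - k)) * b ^ q"
        by (simp add: mult_ac)
      then show ?thesis
        using p q coeff by (metis ideal_gen_mult mult_mem power_mem)
    qed
  qed
  finally show ?thesis
    unfolding radical_def using p q add_mem by blast
qed

lemma radical_diff:
  assumes "a \<in> radical A (ideal_gen A G)" "b \<in> radical A (ideal_gen A G)"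
  shows "a - b \<in> radical A (ideal_gen A G)"
  using radical_add[OF assms(1) radical_mult[OF uminus_mem[OF one_mem] assms(2)]] by simp

lemma radical_of_square:
  assumes "a \<in> A" "a ^ 2 \<in> radical A (ideal_gen A G)"
  shows "a \<in> radical A (ideal_gen A G)"
proof -
  obtain n where "(a ^ 2) ^ n \<in> ideal_gen A G"
    using assms(2) unfolding radical_def by blast
  with assms(1) show ?thesis
    unfolding radical_def by (auto simp: power_mult[symmetric])
qed

lemma radical_binomial_split:
  assumes mem: "p \<in> A" "q \<in> A" "p' \<in> A" "q' \<in> A" "w \<in> A"
    and pq: "p * q \<in> radical A (ideal_gen A G)"
    and binom1: "p * q' + p' * w \<in> radical A (ideal_gen A G)"
    and binom2: "p' * q' + q * w \<in> radical A (ideal_gen A G)"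
  shows "p * q' \<in> radical A (ideal_gen A G) \<and> p' * w \<in> radical A (ideal_gen A G)
    \<and> p' * q' \<in> radical A (ideal_gen A G) \<and> q * w \<in> radical A (ideal_gen A G)"
proof -
  let ?Q = "radical A (ideal_gen A G)"
  have "p' * q * w = q * (p * q' + p' * w) - q' * (p * q)"
    by (simp add: algebra_simps)
  then have p'qw: "p' * q * w \<in> ?Q"
    using mem pq binom1 by (metis radical_diff radical_mult)
  have "(q * w) ^ 2 = (q * w) * (p' * q' + q * w) - q' * (p' * q * w)"
    by (simp add: algebra_simps power2_eq_square)
  then have qw: "q * w \<in> ?Q"
    using mem binom2 p'qw by (metis radical_diff radical_mult radical_of_square mult_mem)
  have "p * p' * q' = p * (p' * q' + q * w) - w * (p * q)"
    by (simp add: algebra_simps)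
  then have pp'q': "p * p' * q' \<in> ?Q"
    using mem pq binom2 by (metis radical_diff radical_mult)
  have "(p * q') ^ 2 = (p * q') * (p * q' + p' * w) - w * (p * p' * q')"
    by (simp add: algebra_simps power2_eq_square)
  then have pq': "p * q' \<in> ?Q"
    using mem binom1 pp'q' by (metis radical_diff radical_mult radical_of_square mult_mem)
  have "p' * w = (p * q' + p' * w) - p * q'" "p' * q' = (p' * q' + q * w) - q * w"
    by simp_all
  then show ?thesis
    using binom1 binom2 qw pq' by (metis radical_diff)
qed

lemma chain_mem_radical:
  fixes x :: "nat \<Rightarrow> 'a"
  assumes x: "\<And>i. i \<in> {1..3*m+3} \<Longrightarrow> x i \<in> A"
    and G: "G \<subseteq> A" "x 1 * x 2 \<in> G"
      "\<And>n. n \<in> {1..m} \<Longrightarrow> x (3*n-2) * x (3*n+2) + x (3*n+1) * x (3*n+3) \<in> G"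
      "\<And>n. n \<in> {1..m} \<Longrightarrow> x (3*n+1) * x (3*n+2) + x (3*n-1) * x (3*n+3) \<in> G"
    and n: "n \<in> {1..m}"
  shows "x (3*n-2) * x (3*n+2) \<in> radical A (ideal_gen A G)
    \<and> x (3*n+1) * x (3*n+3) \<in> radical A (ideal_gen A G)
    \<and> x (3*n+1) * x (3*n+2) \<in> radical A (ideal_gen A G)
    \<and> x (3*n-1) * x (3*n+3) \<in> radical A (ideal_gen A G)"
    (is "?P n")
proof -
  let ?Q = "radical A (ideal_gen A G)"
  note gen = generator_mem_radical[OF G(1)]
  have split: "?P n" if n: "n \<in> {1..m}" and pq: "x (3*n-2) * x (3*n-1) \<in> ?Q" for n
  proof -
    have x_mem: "x i \<in> A" if "3*n-2 \<le> i" "i \<le> 3*n+3" for i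
      using x that n by auto
    show ?thesis
      by (rule radical_binomial_split) (use x_mem pq gen G(3,4) n in auto)
  qed
  have link: "x (3*n-2) * x (3*n-1) \<in> ?Q" if "n \<in> {1..m}" for n
  proof -
    have "1 \<le> n" "n \<le> m"
      using that by auto
    then show ?thesis
    proof (induction n rule: nat_induct_at_least)
      case base
      show ?case
        using gen G(2) by simp
    next
      case (Suc n)
      then have "x (3*n+1) * x (3*n+2) \<in> ?Q"
        using split by simp
      then show ?case
        by (simp add: numeral_3_eq_3)
    qed
  qed
  show ?thesis
    using split[OF n link[OF n]] .
qed

lemma ideal_gen_eq_radical_ideal_gen:
  assumes H: "H \<subseteq> ideal_gen A G" and G: "G \<subseteq> radical A (ideal_gen A H)"
    and radical: "\<And>f n. f \<in> A \<Longrightarrow> f ^ n \<in> ideal_gen A G \<Longrightarrow> f \<in> ideal_gen A G"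
  shows "ideal_gen A G = radical A (ideal_gen A H)"
proof
  show "ideal_gen A G \<subseteq> radical A (ideal_gen A H)"
    by (rule ideal_gen_least) (use G in \<open>auto intro: radical_zero radical_add radical_mult\<close>)
  have "ideal_gen A H \<subseteq> ideal_gen A G"
    by (rule ideal_gen_least) (use H in \<open>auto intro: ideal_gen_zero ideal_gen_add ideal_gen_mult\<close>)
  then show "radical A (ideal_gen A H) \<subseteq> ideal_gen A G"
    unfolding radical_def using radical by blast
qed

end

lemma keys_add_nat:
  "Poly_Mapping.keys ((a::'b \<Rightarrow>\<^sub>0 nat) + b) = Poly_Mapping.keys a \<union> Poly_Mapping.keys b"
  by (auto simp: in_keys_iff lookup_add)

lemma poly_mapping_sum_single_lookup:
  "f = (\<Sum>k\<in>Poly_Mapping.keys f. Poly_Mapping.single k (Poly_Mapping.lookup f k))"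
  by (rule poly_mapping_eqI) (auto simp: lookup_sum lookup_single when_def in_keys_iff)

interpretation poly_ring: subring "poly_ring N" for N
proof
  show "a + b \<in> poly_ring N" if "a \<in> poly_ring N" "b \<in> poly_ring N" for a b :: "'a mpoly"
    using that keys_add[of a b] unfolding poly_ring_def by blast
  show "a * b \<in> poly_ring N" if "a \<in> poly_ring N" "b \<in> poly_ring N" for a b :: "'a mpoly"
    using that keys_mult[of a b] unfolding poly_ring_def by (fastforce simp: keys_add_nat)
qed (simp_all add: poly_ring_def)

lemma single_mem_poly_ring: "Poly_Mapping.keys k \<subseteq> {1..N} \<Longrightarrow> Poly_Mapping.single k c \<in> poly_ring N"
  unfolding poly_ring_def by simp

lemma mvar_mem_poly_ring: "i \<in> {1..N} \<Longrightarrow> mvar i \<in> poly_ring N"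
  unfolding mvar_def by (rule single_mem_poly_ring) simp

lemma prod_mvar_eq_single:
  "finite T \<Longrightarrow> (\<Prod>i\<in>T. mvar i) = Poly_Mapping.single (\<Sum>i\<in>T. Poly_Mapping.single i 1) (1::'a::comm_ring_1)"
  by (induction T rule: finite_induct) (simp_all add: mvar_def mult_single)

lemma lookup_sum_single_one:
  "finite T \<Longrightarrow> Poly_Mapping.lookup (\<Sum>i\<in>T. Poly_Mapping.single i (1::nat)) j = (if j \<in> T then 1 else 0)"
  by (simp add: lookup_sum lookup_single when_def)

lemma keys_sum_single_one:
  "finite T \<Longrightarrow> Poly_Mapping.keys (\<Sum>i\<in>T. Poly_Mapping.single i (1::nat)) = T"
  unfolding set_eq_iff in_keys_iff lookup_sum_single_one by simp

definition restrict_vars :: "nat set \<Rightarrow> 'a::comm_ring_1 mpoly \<Rightarrow> 'a mpoly" where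
  "restrict_vars S f =
    Abs_poly_mapping (\<lambda>k. if Poly_Mapping.keys k \<subseteq> S then Poly_Mapping.lookup f k else 0)"

lemma lookup_restrict_vars:
  "Poly_Mapping.lookup (restrict_vars S f) k
    = (if Poly_Mapping.keys k \<subseteq> S then Poly_Mapping.lookup f k else 0)"
proof -
  have "finite {k. (if Poly_Mapping.keys k \<subseteq> S then Poly_Mapping.lookup f k else 0) \<noteq> 0}"
    by (rule finite_subset[OF _ finite_lookup[of f]]) auto
  then show ?thesis
    unfolding restrict_vars_def by simp
qed

lemma restrict_vars_add: "restrict_vars S (f + g) = restrict_vars S f + restrict_vars S g"
  by (rule poly_mapping_eqI) (simp add: lookup_restrict_vars lookup_add)

lemma restrict_vars_zero: "restrict_vars S 0 = 0"
  by (rule poly_mapping_eqI) (simp add: lookup_restrict_vars)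

lemma restrict_vars_sum: "restrict_vars S (sum f A) = (\<Sum>a\<in>A. restrict_vars S (f a))"
  by (induction A rule: infinite_finite_induct) (simp_all add: restrict_vars_zero restrict_vars_add)

lemma restrict_vars_one: "restrict_vars S 1 = 1"
  by (rule poly_mapping_eqI) (simp add: lookup_restrict_vars lookup_one when_def)

lemma restrict_vars_single:
  "restrict_vars S (Poly_Mapping.single k c)
    = (if Poly_Mapping.keys k \<subseteq> S then Poly_Mapping.single k c else 0)"
  by (rule poly_mapping_eqI) (simp add: lookup_restrict_vars lookup_single when_def)

lemma restrict_vars_mult: "restrict_vars S (f * g) = restrict_vars S f * restrict_vars S g"
proof (rule poly_mapping_eqI)
  fix k :: "nat \<Rightarrow>\<^sub>0 nat"
  have term_eq: "(if Poly_Mapping.keys l \<subseteq> S then Poly_Mapping.lookup f l else 0) *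
      (\<Sum>q. Poly_Mapping.lookup (restrict_vars S g) q when k = l + q)
    = (if Poly_Mapping.keys k \<subseteq> S
       then Poly_Mapping.lookup f l * (\<Sum>q. Poly_Mapping.lookup g q when k = l + q) else 0)" for l
  proof (cases "Poly_Mapping.keys l \<subseteq> S")
    case True
    then have "(Poly_Mapping.lookup (restrict_vars S g) q when k = l + q)
        = (if Poly_Mapping.keys k \<subseteq> S then (Poly_Mapping.lookup g q when k = l + q) else 0)" for q
      by (auto simp: lookup_restrict_vars when_def keys_add_nat)
    with True show ?thesis
      by simp
  next
    case False
    then have "(Poly_Mapping.lookup g q when k = l + q) = 0" if "Poly_Mapping.keys k \<subseteq> S" for q
      using that by (auto simp: when_def keys_add_nat)
    with False show ?thesis
      by simp
  qed
  have "Poly_Mapping.lookup (restrict_vars S f * restrict_vars S g) k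
    = (\<Sum>l. (if Poly_Mapping.keys l \<subseteq> S then Poly_Mapping.lookup f l else 0) *
        (\<Sum>q. Poly_Mapping.lookup (restrict_vars S g) q when k = l + q))"
    by (simp add: lookup_mult lookup_restrict_vars)
  also have "\<dots> = (\<Sum>l. if Poly_Mapping.keys k \<subseteq> S
      then Poly_Mapping.lookup f l * (\<Sum>q. Poly_Mapping.lookup g q when k = l + q) else 0)"
    by (simp only: term_eq)
  also have "\<dots> = Poly_Mapping.lookup (restrict_vars S (f * g)) k"
    by (simp add: lookup_mult lookup_restrict_vars)
  finally show "Poly_Mapping.lookup (restrict_vars S (f * g)) k
      = Poly_Mapping.lookup (restrict_vars S f * restrict_vars S g) k" ..
qed

lemma restrict_vars_power: "restrict_vars S (f ^ n) = restrict_vars S f ^ n"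
  by (induction n) (simp_all add: restrict_vars_one restrict_vars_mult)

lemma restrict_vars_prod_mvar:
  "finite T \<Longrightarrow> restrict_vars S (\<Prod>i\<in>T. mvar i) = (if T \<subseteq> S then (\<Prod>i\<in>T. mvar i) else 0)"
  unfolding prod_mvar_eq_single restrict_vars_single keys_sum_single_one ..

lemma restrict_vars_ideal_gen:
  assumes "\<And>g. g \<in> G \<Longrightarrow> restrict_vars S g = 0" and "p \<in> ideal_gen A G"
  shows "restrict_vars S p = 0"
proof -
  obtain F c where "p = (\<Sum>g\<in>F. c g * g)" "F \<subseteq> G"
    using assms(2) unfolding ideal_gen_def by blast
  with assms(1) show ?thesis
    by (auto simp: restrict_vars_sum restrict_vars_mult intro!: sum.neutral)
qed

lemma single_mem_ideal_gen_squarefree: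
  assumes k: "Poly_Mapping.keys k \<subseteq> {1..N}" and T: "finite T" "T \<subseteq> Poly_Mapping.keys k"
    and gen: "(\<Prod>i\<in>T. mvar i) \<in> G"
  shows "Poly_Mapping.single k (c::'a::comm_ring_1) \<in> ideal_gen (poly_ring N) G"
proof -
  define e where "e = (\<Sum>i\<in>T. Poly_Mapping.single i (1::nat))"
  have "Poly_Mapping.lookup e i \<le> Poly_Mapping.lookup k i" for i
    using T unfolding e_def lookup_sum_single_one[OF T(1)] by (auto simp: in_keys_iff)
  then have "k = (k - e) + e"
    by (intro poly_mapping_eqI) (simp add: lookup_add lookup_minus)
  then have "Poly_Mapping.single k c = Poly_Mapping.single (k - e) c * (\<Prod>i\<in>T. mvar i)"
    using T(1) by (simp add: prod_mvar_eq_single e_def mult_single)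
  moreover have "Poly_Mapping.single (k - e) c \<in> poly_ring N"
    using k by (intro single_mem_poly_ring) (auto simp: in_keys_iff lookup_minus)
  ultimately show ?thesis
    using poly_ring.ideal_gen_mult_generator gen by metis
qed

lemma squarefree_monomial_ideal_radical:
  fixes G :: "'a::idom mpoly set"
  assumes G: "\<And>g. g \<in> G \<Longrightarrow> \<exists>T. finite T \<and> g = (\<Prod>i\<in>T. mvar i)"
    and f: "f \<in> poly_ring N" and fn: "f ^ n \<in> ideal_gen (poly_ring N) G"
  shows "f \<in> ideal_gen (poly_ring N) G"
proof -
  consider (covered) "\<forall>k\<in>Poly_Mapping.keys f. \<exists>T. finite T \<and> T \<subseteq> Poly_Mapping.keys k \<and> (\<Prod>i\<in>T. mvar i) \<in> G"
    | (uncovered) k where "k \<in> Poly_Mapping.keys f"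
        "\<And>T. finite T \<Longrightarrow> (\<Prod>i\<in>T. mvar i) \<in> G \<Longrightarrow> \<not> T \<subseteq> Poly_Mapping.keys k"
    by blast
  then show ?thesis
  proof cases
    case covered
    have "(\<Sum>k\<in>Poly_Mapping.keys f. Poly_Mapping.single k (Poly_Mapping.lookup f k))
        \<in> ideal_gen (poly_ring N) G"
    proof (rule poly_ring.ideal_gen_sum)
      fix k assume k: "k \<in> Poly_Mapping.keys f"
      obtain T where T: "finite T" "T \<subseteq> Poly_Mapping.keys k" "(\<Prod>i\<in>T. mvar i) \<in> G"
        using covered k by blast
      have "Poly_Mapping.keys k \<subseteq> {1..N}"
        using f k unfolding poly_ring_def by blast
      from single_mem_ideal_gen_squarefree[OF this T]
      show "Poly_Mapping.single k (Poly_Mapping.lookup f k) \<in> ideal_gen (poly_ring N) G" .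
    qed
    then show ?thesis
      by (simp only: poly_mapping_sum_single_lookup[of f, symmetric])
  next
    case uncovered
    have "restrict_vars (Poly_Mapping.keys k) g = 0" if g: "g \<in> G" for g
    proof -
      obtain T where T: "finite T" "g = (\<Prod>i\<in>T. mvar i)"
        using G[OF g] by blast
      with g uncovered(2) show ?thesis
        by (simp add: restrict_vars_prod_mvar)
    qed
    from restrict_vars_ideal_gen[OF this fn]
    have "restrict_vars (Poly_Mapping.keys k) f ^ n = 0"
      by (simp only: restrict_vars_power)
    then have "Poly_Mapping.lookup (restrict_vars (Poly_Mapping.keys k) f) k = 0"
      by simp
    with uncovered(1) show ?thesis
      by (simp add: lookup_restrict_vars in_keys_iff)
  qed
qed

theorem mainTheorem6:
  fixes m :: nat
  assumes "m \<ge> 2"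
  defines "x \<equiv> (mvar :: nat \<Rightarrow> 'a::field mpoly)"
  defines "s \<equiv> (\<lambda>n. x (3*n-2) * x (3*n+2))"
    and "t \<equiv> (\<lambda>n. x (3*n+1) * x (3*n+3))"
    and "u \<equiv> (\<lambda>n. x (3*n+1) * x (3*n+2))"
    and "v \<equiv> (\<lambda>n. x (3*n-1) * x (3*n+3))"
  defines "R \<equiv> (poly_ring (3*m+3) :: 'a mpoly set)"
  defines "I \<equiv> ideal_gen R ({x 1 * x 2} \<union> s ` {1..m} \<union> t ` {1..m} \<union> u ` {1..m} \<union> v ` {1..m})"
    and "J \<equiv> ideal_gen R ({x 1 * x 2} \<union> (\<lambda>n. s n + t n) ` {1..m} \<union> (\<lambda>n. u n + v n) ` {1..m})"
  shows "I = radical R J"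
proof -
  let ?GI = "{x 1 * x 2} \<union> s ` {1..m} \<union> t ` {1..m} \<union> u ` {1..m} \<union> v ` {1..m}"
  let ?GJ = "{x 1 * x 2} \<union> (\<lambda>n. s n + t n) ` {1..m} \<union> (\<lambda>n. u n + v n) ` {1..m}"
  interpret subring R
    unfolding R_def by (rule poly_ring.subring_axioms)
  have x_mem: "x i \<in> R" if "i \<in> {1..3*m+3}" for i
    using that unfolding x_def R_def by (rule mvar_mem_poly_ring)
  have squarefree: "\<exists>T. finite T \<and> x i * x j = (\<Prod>k\<in>T. mvar k)" if "i \<noteq> j" for i j
    using that unfolding x_def by (intro exI[of _ "{i, j}"]) simp
  have GJ_mem: "?GJ \<subseteq> R"
    by (auto simp: s_def t_def u_def v_def intro!: add_mem mult_mem x_mem)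
  show ?thesis
    unfolding I_def J_def
  proof (rule ideal_gen_eq_radical_ideal_gen)
    show "?GJ \<subseteq> ideal_gen R ?GI"
      by (auto intro!: ideal_gen_add intro: generator_mem_ideal_gen)
    have "s n \<in> radical R (ideal_gen R ?GJ) \<and> t n \<in> radical R (ideal_gen R ?GJ)
      \<and> u n \<in> radical R (ideal_gen R ?GJ) \<and> v n \<in> radical R (ideal_gen R ?GJ)" if n: "n \<in> {1..m}" for n
      using chain_mem_radical[where x = x and G = "?GJ", OF x_mem GJ_mem _ _ _ n] n
      unfolding s_def t_def u_def v_def by blast
    moreover have "x 1 * x 2 \<in> radical R (ideal_gen R ?GJ)"
      by (rule generator_mem_radical[OF GJ_mem]) simp
    ultimately show "?GI \<subseteq> radical R (ideal_gen R ?GJ)"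
      by blast
    have "\<exists>T. finite T \<and> g = (\<Prod>k\<in>T. mvar k)" if "g \<in> ?GI" for g
      using that unfolding s_def t_def u_def v_def
      by (elim UnE imageE singletonE) (simp_all add: squarefree)
    then show "f \<in> ideal_gen R ?GI" if "f \<in> R" "f ^ n \<in> ideal_gen R ?GI" for f n
      using that unfolding R_def by (rule squarefree_monomial_ideal_radical)
  qed
qed

end
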